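(* Let $(\Omega(\mathcal{A}),d)$ be a differential calculus on a complex algebra $\mathcal{A}$ with $\mathcal{E}=\Omega^1(\mathcal{A})$ a finitely generated projective right $\mathcal{A}$-module satisfying: (1) $\mathcal{E}=\mathcal{Z}(\mathcal{E})\otimes_{\mathcal{Z}(\mathcal{A})}\mathcal{A}$; (2) $\mathcal{E}\otimes_{\mathcal{A}}\mathcal{E}=\ker(\wedge)\oplus\mathcal{F}$ with $\mathcal{F}$ a right submodule and $Q=\wedge|_{\mathcal{F}}:\mathcal{F}\to\Omega^2(\mathcal{A})$ a right $\mathcal{A}$-linear isomorphism; (3) $\sigma(\omega\otimes_{\mathcal{A}}\eta)=\eta\otimes_{\mathcal{A}}\omega$ for all $\omega,\eta\in\mathcal{Z}(\mathcal{E})$. Then: (a) the map $\sigma$, and hence $P_{\rm sym}$, is $\mathcal{A}$-$\mathcal{A}$-bilinear; (b) the map $Q:\mathcal{F}\to\Omega^2(\mathcal{A})$ is an $\mathcal{A}$-$\mathcal{A}$-bilinear isomorphism.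
   Context: A differential calculus: $\Omega(\mathcal{A})=\oplus_{j\ge0}\Omega^j(\mathcal{A})$, $\Omega^0=\mathcal{A}$, bimodules $\Omega^j$, an $\mathcal{A}$-bimodule product $\wedge$ adding degrees, $d$ of degree one with $d^2=0$ and the graded Leibniz rule, $\Omega^j$ right-spanned by $da_0\wedge\cdots\wedge da_{j-1}$. $\wedge:\mathcal{E}\otimes_{\mathcal{A}}\mathcal{E}\to\Omega^2(\mathcal{A})$ is the induced product. $P_{\rm sym}$ is the idempotent on $\mathcal{E}\otimes_{\mathcal{A}}\mathcal{E}$ with image $\ker\wedge$ and kernel $\mathcal{F}$, and $\sigma=2P_{\rm sym}-1$. For a bimodule $\mathcal{M}$, $\mathcal{Z}(\mathcal{M})=\{m:am=ma\ \forall a\in\mathcal{A}\}$; $\mathcal{Z}(\mathcal{A})$ is the center of $\mathcal{A}$. Condition (1) means the multiplication map $\mathcal{Z}(\mathcal{E})\otimes_{\mathcal{Z}(\mathcal{A})}\mathcal{A}\to\mathcal{E}$ is an isomorphism. *)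

theory Defs
  imports Complex_Main "HOL-Library.Poly_Mapping"
begin

definition centre :: "'a::ring_1 set" where
  "centre = {z. \<forall>a. z * a = a * z}"

text \<open>A unital complex algebra: a ring together with a unital ring homomorphism
  from the complex numbers into its centre (the scalar multiplication).\<close>
definition complex_alg :: "(complex \<Rightarrow> 'a::ring_1) \<Rightarrow> bool" where
  "complex_alg \<kappa> \<longleftrightarrow> \<kappa> 1 = 1 \<and> (\<forall>x y. \<kappa> (x + y) = \<kappa> x + \<kappa> y \<and> \<kappa> (x * y) = \<kappa> x * \<kappa> y)
     \<and> (\<forall>c a. \<kappa> c * a = a * \<kappa> c)"

definition subgrp :: "'m::ab_group_add set \<Rightarrow> bool" where
  "subgrp M \<longleftrightarrow> 0 \<in> M \<and> (\<forall>x\<in>M. - x \<in> M \<and> (\<forall>y\<in>M. x + y \<in> M))"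

definition right_mod :: "'m::ab_group_add set \<Rightarrow> ('m \<Rightarrow> 'a::ring_1 \<Rightarrow> 'm) \<Rightarrow> bool" where
  "right_mod M r \<longleftrightarrow> subgrp M \<and> (\<forall>x\<in>M. \<forall>a. r x a \<in> M)
     \<and> (\<forall>x\<in>M. \<forall>y\<in>M. \<forall>a. r (x + y) a = r x a + r y a)
     \<and> (\<forall>x\<in>M. \<forall>a b. r x (a + b) = r x a + r x b \<and> r x (a * b) = r (r x a) b)
     \<and> (\<forall>x\<in>M. r x 1 = x)"

definition left_mod :: "'m::ab_group_add set \<Rightarrow> ('a::ring_1 \<Rightarrow> 'm \<Rightarrow> 'm) \<Rightarrow> bool" where
  "left_mod M l \<longleftrightarrow> subgrp M \<and> (\<forall>x\<in>M. \<forall>a. l a x \<in> M)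
     \<and> (\<forall>x\<in>M. \<forall>y\<in>M. \<forall>a. l a (x + y) = l a x + l a y)
     \<and> (\<forall>x\<in>M. \<forall>a b. l (a + b) x = l a x + l b x \<and> l (a * b) x = l a (l b x))
     \<and> (\<forall>x\<in>M. l 1 x = x)"

definition bimod :: "'m::ab_group_add set \<Rightarrow> ('a::ring_1 \<Rightarrow> 'm \<Rightarrow> 'm) \<Rightarrow> ('m \<Rightarrow> 'a \<Rightarrow> 'm) \<Rightarrow> bool" where
  "bimod M l r \<longleftrightarrow> left_mod M l \<and> right_mod M r \<and> (\<forall>x\<in>M. \<forall>a b. r (l a x) b = l a (r x b))"

text \<open>Finitely generated projective right module: a retract (direct summand) of a
  free right module of finite rank n, realised as the functions nat => 'a vanishing
  from n on, with componentwise right action.\<close>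
definition fg_projective_right :: "'m::ab_group_add set \<Rightarrow> ('m \<Rightarrow> 'a::ring_1 \<Rightarrow> 'm) \<Rightarrow> bool" where
  "fg_projective_right M r \<longleftrightarrow> right_mod M r \<and>
     (\<exists>(n::nat) (s::'m \<Rightarrow> nat \<Rightarrow> 'a) (p::(nat \<Rightarrow> 'a) \<Rightarrow> 'm).
        (\<forall>x\<in>M. \<forall>i\<ge>n. s x i = 0)
      \<and> (\<forall>x\<in>M. \<forall>y\<in>M. s (x + y) = (\<lambda>i. s x i + s y i))
      \<and> (\<forall>x\<in>M. \<forall>a. s (r x a) = (\<lambda>i. s x i * a))
      \<and> (\<forall>v. (\<forall>i\<ge>n. v i = 0) \<longrightarrow> p v \<in> M)
      \<and> (\<forall>v w. (\<forall>i\<ge>n. v i = 0) \<longrightarrow> (\<forall>i\<ge>n. w i = 0) \<longrightarrow> p (\<lambda>i. v i + w i) = p v + p w)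
      \<and> (\<forall>v a. (\<forall>i\<ge>n. v i = 0) \<longrightarrow> p (\<lambda>i. v i * a) = r (p v) a)
      \<and> (\<forall>x\<in>M. p (s x) = x))"

text \<open>Relation subgroup of the free abelian group on M x N defining the balanced
  tensor product of a right R-module M with a left R-module N.\<close>
inductive_set tensor_rel :: "'m::ab_group_add set \<Rightarrow> 'n::ab_group_add set \<Rightarrow> 'r set
    \<Rightarrow> ('m \<Rightarrow> 'r \<Rightarrow> 'm) \<Rightarrow> ('r \<Rightarrow> 'n \<Rightarrow> 'n) \<Rightarrow> ('m \<times> 'n \<Rightarrow>\<^sub>0 int) set"
  for M N R rM lN where
  zero: "0 \<in> tensor_rel M N R rM lN"
| addl: "m \<in> M \<Longrightarrow> m' \<in> M \<Longrightarrow> n \<in> N \<Longrightarrow>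
     Poly_Mapping.single (m + m', n) 1 - Poly_Mapping.single (m, n) 1 - Poly_Mapping.single (m', n) 1
       \<in> tensor_rel M N R rM lN"
| addr: "m \<in> M \<Longrightarrow> n \<in> N \<Longrightarrow> n' \<in> N \<Longrightarrow>
     Poly_Mapping.single (m, n + n') 1 - Poly_Mapping.single (m, n) 1 - Poly_Mapping.single (m, n') 1
       \<in> tensor_rel M N R rM lN"
| bal: "m \<in> M \<Longrightarrow> n \<in> N \<Longrightarrow> r \<in> R \<Longrightarrow>
     Poly_Mapping.single (rM m r, n) 1 - Poly_Mapping.single (m, lN r n) 1 \<in> tensor_rel M N R rM lN"
| diff: "x \<in> tensor_rel M N R rM lN \<Longrightarrow> y \<in> tensor_rel M N R rM lN \<Longrightarrow>
     x - y \<in> tensor_rel M N R rM lN"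

text \<open>(T, tens) is the tensor product M \<otimes>_R N: T consists of the finite sums of pure
  tensors, tens is biadditive and R-balanced, and the only relations among pure
  tensors are those forced by these rules (i.e. T is the standard quotient of the
  free abelian group on M x N by the relation subgroup).\<close>
definition tensor_product :: "'m::ab_group_add set \<Rightarrow> 'n::ab_group_add set \<Rightarrow> 'r set
    \<Rightarrow> ('m \<Rightarrow> 'r \<Rightarrow> 'm) \<Rightarrow> ('r \<Rightarrow> 'n \<Rightarrow> 'n) \<Rightarrow> 't::ab_group_add set \<Rightarrow> ('m \<Rightarrow> 'n \<Rightarrow> 't) \<Rightarrow> bool" where
  "tensor_product M N R rM lN T tens \<longleftrightarrow>
     T = {\<Sum>i<(k::nat). tens (ms i) (ns i) | k ms ns. \<forall>i<k. ms i \<in> M \<and> ns i \<in> N}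
   \<and> (\<forall>m\<in>M. \<forall>m'\<in>M. \<forall>n\<in>N. tens (m + m') n = tens m n + tens m' n)
   \<and> (\<forall>m\<in>M. \<forall>n\<in>N. \<forall>n'\<in>N. tens m (n + n') = tens m n + tens m n')
   \<and> (\<forall>m\<in>M. \<forall>n\<in>N. \<forall>r\<in>R. tens (rM m r) n = tens m (lN r n))
   \<and> (\<forall>(k::nat) ms ns. (\<forall>i<k. ms i \<in> M \<and> ns i \<in> N) \<and> (\<Sum>i<k. tens (ms i) (ns i)) = 0 \<longrightarrow>
        (\<Sum>i<k. Poly_Mapping.single (ms i, ns i) (1::int)) \<in> tensor_rel M N R rM lN)"

fun dprod :: "('a::one \<Rightarrow> 'o) \<Rightarrow> ('o \<Rightarrow> 'o \<Rightarrow> 'o) \<Rightarrow> ('o \<Rightarrow> 'o) \<Rightarrow> 'a list \<Rightarrow> 'o" where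
  "dprod \<iota> w d [] = \<iota> 1"
| "dprod \<iota> w d (a # as) = w (d (\<iota> a)) (dprod \<iota> w d as)"

text \<open>The ambient type 'o is
  \<Omega>(A) = \<oplus>_j \<Omega>^j, with \<Omega>^j = Om j; lm / rm are the A-bimodule actions,
  \<iota> identifies A with \<Omega>^0, w is the product \<wedge> and d the differential.\<close>
definition diff_calculus :: "(complex \<Rightarrow> 'a::ring_1) \<Rightarrow> (nat \<Rightarrow> 'o::ab_group_add set)
    \<Rightarrow> ('a \<Rightarrow> 'o \<Rightarrow> 'o) \<Rightarrow> ('o \<Rightarrow> 'a \<Rightarrow> 'o) \<Rightarrow> ('a \<Rightarrow> 'o) \<Rightarrow> ('o \<Rightarrow> 'o \<Rightarrow> 'o) \<Rightarrow> ('o \<Rightarrow> 'o) \<Rightarrow> bool" where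
  "diff_calculus \<kappa> Om lm rm \<iota> w d \<longleftrightarrow>
     complex_alg \<kappa>
   \<and> (\<forall>j. bimod (Om j) lm rm)
   \<and> (\<forall>j c. \<forall>x\<in>Om j. lm (\<kappa> c) x = rm x (\<kappa> c))
   \<and> (\<forall>n (x::nat \<Rightarrow> 'o). (\<forall>j<n. x j \<in> Om j) \<and> (\<Sum>j<n. x j) = 0 \<longrightarrow> (\<forall>j<n. x j = 0))
   \<and> (\<forall>y. \<exists>n (x::nat \<Rightarrow> 'o). (\<forall>j<n. x j \<in> Om j) \<and> y = (\<Sum>j<n. x j))
   \<and> bij_betw \<iota> UNIV (Om 0)
   \<and> (\<forall>a b. \<iota> (a + b) = \<iota> a + \<iota> b \<and> lm a (\<iota> b) = \<iota> (a * b) \<and> rm (\<iota> a) b = \<iota> (a * b))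
   \<and> (\<forall>x y z. w (x + y) z = w x z + w y z \<and> w x (y + z) = w x y + w x z)
   \<and> (\<forall>j k. \<forall>x\<in>Om j. \<forall>y\<in>Om k. w x y \<in> Om (j + k))
   \<and> (\<forall>j k a. \<forall>x\<in>Om j. \<forall>y\<in>Om k.
        w (lm a x) y = lm a (w x y) \<and> w (rm x a) y = w x (lm a y) \<and> w x (rm y a) = rm (w x y) a)
   \<and> (\<forall>j a. \<forall>x\<in>Om j. w (\<iota> a) x = lm a x \<and> w x (\<iota> a) = rm x a)
   \<and> (\<forall>x y. d (x + y) = d x + d y)
   \<and> (\<forall>j. \<forall>x\<in>Om j. d x \<in> Om (Suc j))
   \<and> (\<forall>x. d (d x) = 0)
   \<and> (\<forall>j k. \<forall>x\<in>Om j. \<forall>y\<in>Om k.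
        d (w x y) = w (d x) y + (if even j then w x (d y) else - w x (d y)))
   \<and> (\<forall>j c. \<forall>x\<in>Om j. d (lm (\<kappa> c) x) = lm (\<kappa> c) (d x))
   \<and> (\<forall>j. Om j = {\<Sum>i<(n::nat). rm (dprod \<iota> w d (as i)) (b i) | n as b. \<forall>i<n. length (as i) = j})"

definition central_elts :: "'m set \<Rightarrow> ('a \<Rightarrow> 'm \<Rightarrow> 'm) \<Rightarrow> ('m \<Rightarrow> 'a \<Rightarrow> 'm) \<Rightarrow> 'm set" where
  "central_elts M l r = {x\<in>M. \<forall>a. l a x = r x a}"

definition sigma_of :: "('t::ab_group_add \<Rightarrow> 't) \<Rightarrow> 't \<Rightarrow> 't" where
  "sigma_of P t = P t + P t - t"

end

theory Submission
  imports Defs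
begin

(* Since \<wedge> is right linear, both ker \<wedge> and F are right submodules of E \<otimes>_A E, so the
   projection P_sym onto the first summand, and with it \<sigma> = 2 P_sym - 1, commutes with the
   right action. By condition (1), E \<otimes>_A E is additively spanned by the elements
   (\<omega> \<otimes> \<eta>) c with \<omega>, \<eta> central, and for these a (\<omega> \<otimes> \<eta>) c = (\<omega> \<otimes> \<eta>) (a c);
   together with \<sigma> (\<omega> \<otimes> \<eta>) = \<eta> \<otimes> \<omega> and right linearity this makes \<sigma> left linear.
   As 2 is invertible in A, P_sym = (\<sigma> + 1) / 2 is left linear as well, hence F = ker P_sym
   is a sub-bimodule and the restriction Q of the bilinear map \<wedge> is bilinear. *)

definition additive_on :: "'a::ab_group_add set \<Rightarrow> ('a \<Rightarrow> 'b::ab_group_add) \<Rightarrow> bool" where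
  "additive_on S f \<longleftrightarrow> (\<forall>s\<in>S. \<forall>t\<in>S. f (s + t) = f s + f t)"

lemma additive_onD: "additive_on S f \<Longrightarrow> s \<in> S \<Longrightarrow> t \<in> S \<Longrightarrow> f (s + t) = f s + f t"
  unfolding additive_on_def by blast

lemma additive_on_zero: "additive_on S f \<Longrightarrow> 0 \<in> S \<Longrightarrow> f 0 = 0"
  using additive_onD[of S f 0 0] by simp

lemma subgrp_zero: "subgrp S \<Longrightarrow> 0 \<in> S"
  and subgrp_add: "subgrp S \<Longrightarrow> s \<in> S \<Longrightarrow> t \<in> S \<Longrightarrow> s + t \<in> S"
  and subgrp_diff: "subgrp S \<Longrightarrow> s \<in> S \<Longrightarrow> t \<in> S \<Longrightarrow> s - t \<in> S"
  unfolding subgrp_def diff_conv_add_uminus by blast+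

lemma right_mod_zero: "right_mod N r \<Longrightarrow> r 0 a = 0"
  using additive_on_zero[of N "\<lambda>x. r x a"] by (simp add: right_mod_def additive_on_def subgrp_def)

lemma additive_on_diff:
  assumes "additive_on S f" "subgrp S" "s \<in> S" "t \<in> S"
  shows "f (s - t) = f s - f t"
proof -
  have "f s = f ((s - t) + t)" by simp
  also have "\<dots> = f (s - t) + f t" using assms subgrp_diff additive_onD by blast
  finally show ?thesis by (simp add: algebra_simps)
qed

lemma additive_on_comp:
  "additive_on S f \<Longrightarrow> f ` S \<subseteq> S' \<Longrightarrow> additive_on S' g \<Longrightarrow> additive_on S (\<lambda>x. g (f x))"
  unfolding additive_on_def by (simp add: image_subset_iff)

lemma sum_lessThan_closed:
  fixes k :: nat
  assumes "Q 0" "\<And>x y. Q x \<Longrightarrow> Q y \<Longrightarrow> Q (x + y)" "\<And>i. i < k \<Longrightarrow> Q (g i)"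
  shows "Q (\<Sum>i<k. g i)"
  using assms(3) by (induction k) (simp_all add: assms(1,2))

lemma projection_commute:
  assumes P: "additive_on T P" and g: "additive_on T g"
    and decomp: "\<forall>t\<in>T. \<exists>k\<in>K. \<exists>f\<in>F. t = k + f" and "K \<subseteq> T" "F \<subseteq> T"
    and P_K: "\<And>k. k \<in> K \<Longrightarrow> P k = k" and P_F: "\<And>f. f \<in> F \<Longrightarrow> P f = 0"
    and "g ` K \<subseteq> K" "g ` F \<subseteq> F" and "t \<in> T"
  shows "P (g t) = g (P t)"
proof -
  obtain k f where kf: "k \<in> K" "f \<in> F" and t: "t = k + f" using decomp \<open>t \<in> T\<close> by blast
  have "k \<in> T" "f \<in> T" "g k \<in> T" "g f \<in> T"
    using kf \<open>K \<subseteq> T\<close> \<open>F \<subseteq> T\<close> \<open>g ` K \<subseteq> K\<close> \<open>g ` F \<subseteq> F\<close> by auto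
  then have "P (g t) = P (g k) + P (g f)" using P g by (simp add: t additive_onD)
  also have "\<dots> = g k" using kf \<open>g ` K \<subseteq> K\<close> \<open>g ` F \<subseteq> F\<close> by (simp add: P_K P_F image_subset_iff)
  also have "\<dots> = g (P k + P f)" using kf by (simp add: P_K P_F)
  also have "\<dots> = g (P t)" using P \<open>k \<in> T\<close> \<open>f \<in> T\<close> by (simp add: t additive_onD)
  finally show ?thesis .
qed

lemma sigma_of_additive: "additive_on T P \<Longrightarrow> additive_on T (sigma_of P)"
  unfolding additive_on_def sigma_of_def by (simp add: algebra_simps)

lemma sigma_of_image_subset: "subgrp T \<Longrightarrow> P ` T \<subseteq> T \<Longrightarrow> sigma_of P ` T \<subseteq> T"
  unfolding sigma_of_def by (auto intro: subgrp_add subgrp_diff)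

lemma sigma_of_commute:
  assumes T: "subgrp T" and g: "additive_on T g" and "P ` T \<subseteq> T" "t \<in> T"
    and commute: "P (g t) = g (P t)"
  shows "sigma_of P (g t) = g (sigma_of P t)"
proof -
  have "P t \<in> T" using \<open>P ` T \<subseteq> T\<close> \<open>t \<in> T\<close> by blast
  then have "g (P t + P t - t) = g (P t) + g (P t) - g t"
    using T g \<open>t \<in> T\<close> by (simp add: additive_on_diff additive_onD subgrp_add)
  then show ?thesis by (simp add: sigma_of_def commute)
qed

lemma commute_of_sigma_of_commute:
  assumes T: "subgrp T" and g: "additive_on T g" "g ` T \<subseteq> T" and "P ` T \<subseteq> T" "t \<in> T"
    and double_cancel: "\<And>x y. x \<in> T \<Longrightarrow> y \<in> T \<Longrightarrow> x + x = y + y \<Longrightarrow> x = y"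
    and commute: "sigma_of P (g t) = g (sigma_of P t)"
  shows "P (g t) = g (P t)"
proof (rule double_cancel)
  have "P t \<in> T" "g t \<in> T" using \<open>t \<in> T\<close> \<open>P ` T \<subseteq> T\<close> \<open>g ` T \<subseteq> T\<close> by blast+
  then show "P (g t) \<in> T" "g (P t) \<in> T" using \<open>P ` T \<subseteq> T\<close> \<open>g ` T \<subseteq> T\<close> by blast+
  have "P (g t) + P (g t) - g t = g (P t + P t - t)"
    using commute by (simp add: sigma_of_def)
  also have "\<dots> = g (P t) + g (P t) - g t"
    using T g \<open>P t \<in> T\<close> \<open>t \<in> T\<close> by (simp add: additive_on_diff additive_onD subgrp_add)
  finally show "P (g t) + P (g t) = g (P t) + g (P t)" by simp
qed

lemma
  assumes "tensor_product M N R rM lN T tens"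
  shows tensor_product_add_left:
      "m \<in> M \<Longrightarrow> m' \<in> M \<Longrightarrow> n \<in> N \<Longrightarrow> tens (m + m') n = tens m n + tens m' n"
    and tensor_product_add_right:
      "m \<in> M \<Longrightarrow> n \<in> N \<Longrightarrow> n' \<in> N \<Longrightarrow> tens m (n + n') = tens m n + tens m n'"
    and tensor_product_balanced:
      "m \<in> M \<Longrightarrow> n \<in> N \<Longrightarrow> a \<in> R \<Longrightarrow> tens (rM m a) n = tens m (lN a n)"
  using assms unfolding tensor_product_def by blast+

lemma tensor_product_sum_mem:
  assumes "tensor_product M N R rM lN T tens" "\<forall>i<k. ms i \<in> M \<and> ns i \<in> N"
  shows "(\<Sum>i<(k::nat). tens (ms i) (ns i)) \<in> T"
  using assms unfolding tensor_product_def by blast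

lemma tensor_product_zero_mem: "tensor_product M N R rM lN T tens \<Longrightarrow> 0 \<in> T"
  using tensor_product_sum_mem[of M N R rM lN T tens 0] by simp

lemma tensor_product_tens_mem:
  "tensor_product M N R rM lN T tens \<Longrightarrow> x \<in> M \<Longrightarrow> y \<in> N \<Longrightarrow> tens x y \<in> T"
  using tensor_product_sum_mem[of M N R rM lN T tens 1 "\<lambda>_. x" "\<lambda>_. y"] by simp

lemma tensor_product_add_tens_mem:
  assumes tp: "tensor_product M N R rM lN T tens" and "s \<in> T" "x \<in> M" "y \<in> N"
  shows "s + tens x y \<in> T"
proof -
  obtain k ms ns where s: "s = (\<Sum>i<(k::nat). tens (ms i) (ns i))"
    and mn: "\<forall>i<k. ms i \<in> M \<and> ns i \<in> N"
    using tp \<open>s \<in> T\<close> unfolding tensor_product_def by blast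
  have "(\<Sum>i<Suc k. tens ((ms(k := x)) i) ((ns(k := y)) i)) \<in> T"
    using mn assms by (intro tensor_product_sum_mem) auto
  then show ?thesis by (simp add: s)
qed

lemma tensor_product_induct [consumes 2, case_names zero add tens]:
  assumes tp: "tensor_product M N R rM lN T tens" and "t \<in> T"
    and zero: "Q 0"
    and add: "\<And>s t. s \<in> T \<Longrightarrow> t \<in> T \<Longrightarrow> Q s \<Longrightarrow> Q t \<Longrightarrow> Q (s + t)"
    and tens: "\<And>x y. x \<in> M \<Longrightarrow> y \<in> N \<Longrightarrow> Q (tens x y)"
  shows "Q t"
proof -
  obtain k ms ns where t: "t = (\<Sum>i<(k::nat). tens (ms i) (ns i))"
    and mn: "\<forall>i<k. ms i \<in> M \<and> ns i \<in> N"
    using tp \<open>t \<in> T\<close> unfolding tensor_product_def by blast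
  have "Q (\<Sum>i<j. tens (ms i) (ns i))" if "j \<le> k" for j
    using that
  proof (induction j)
    case (Suc j)
    then show ?case
      using mn by (simp add: add tens tensor_product_sum_mem[OF tp] tensor_product_tens_mem[OF tp])
  qed (simp add: zero)
  then show ?thesis by (simp add: t)
qed

lemma tensor_product_subgrp:
  assumes tp: "tensor_product M N R rM lN T tens" and "subgrp N"
  shows "subgrp T"
proof -
  have add_mem: "s + t \<in> T" if "s \<in> T" "t \<in> T" for s t
    using tp \<open>t \<in> T\<close> \<open>s \<in> T\<close>
  proof (induction t arbitrary: s rule: tensor_product_induct)
    case (add t t')
    then show ?case by (metis add.assoc)
  qed (simp_all add: tensor_product_add_tens_mem[OF tp])
  have "- t \<in> T" if "t \<in> T" for t
    using tp \<open>t \<in> T\<close>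
  proof (induction rule: tensor_product_induct)
    case (tens x y)
    have "tens x (- y) + tens x y = tens x (- y + y)"
      using tensor_product_add_right[OF tp tens(1), of "- y" y] tens \<open>subgrp N\<close>
      by (simp add: subgrp_def)
    also have "\<dots> = 0"
      using additive_on_zero[of N "tens x"] tens \<open>subgrp N\<close>
      by (simp add: additive_on_def tensor_product_add_right[OF tp] subgrp_zero)
    finally have "- tens x y = tens x (- y)" by (simp add: add_eq_0_iff2)
    then show ?case
      using tp tens \<open>subgrp N\<close> by (simp add: tensor_product_tens_mem subgrp_def)
  next
    case (add s t)
    then show ?case using add_mem by (metis minus_add_distrib)
  qed (simp add: tensor_product_zero_mem[OF tp])
  then show ?thesis
    using add_mem tensor_product_zero_mem[OF tp] unfolding subgrp_def by blast
qed

lemma tensor_product_additive_eq: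
  assumes tp: "tensor_product M N R rM lN T tens" and "additive_on T f" "additive_on T g"
    and "\<And>x y. x \<in> M \<Longrightarrow> y \<in> N \<Longrightarrow> f (tens x y) = g (tens x y)" and "t \<in> T"
  shows "f t = g t"
  using tp \<open>t \<in> T\<close>
proof (induction rule: tensor_product_induct)
  case zero
  show ?case using assms additive_on_zero tensor_product_zero_mem[OF tp] by metis
qed (use assms in \<open>simp_all add: additive_onD\<close>)

lemma tensor_product_image_subset:
  assumes tp: "tensor_product M N R rM lN T tens" and "additive_on T f" "subgrp S"
    and "\<And>x y. x \<in> M \<Longrightarrow> y \<in> N \<Longrightarrow> f (tens x y) \<in> S"
  shows "f ` T \<subseteq> S"
proof
  fix u assume "u \<in> f ` T"
  then obtain t where "t \<in> T" "u = f t" by blast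
  have "f t \<in> S"
    using tp \<open>t \<in> T\<close>
  proof (induction rule: tensor_product_induct)
    case zero
    show ?case using assms additive_on_zero tensor_product_zero_mem[OF tp] subgrp_zero by metis
  qed (use assms in \<open>simp_all add: additive_onD subgrp_add\<close>)
  then show "u \<in> S" using \<open>u = f t\<close> by simp
qed

lemma tensor_product_additive_sum:
  assumes tp: "tensor_product M N R rM lN T tens" and f: "additive_on T f"
    and mn: "\<forall>i<k. ms i \<in> M \<and> ns i \<in> N"
  shows "f (\<Sum>i<(k::nat). tens (ms i) (ns i)) = (\<Sum>i<k. f (tens (ms i) (ns i)))"
  using mn
proof (induction k)
  case 0
  show ?case using additive_on_zero[OF f tensor_product_zero_mem[OF tp]] by simp
next
  case (Suc k)
  then show ?case
    using tp by (simp add: additive_onD[OF f] tensor_product_sum_mem tensor_product_tens_mem)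
qed

definition centrally_generated ::
    "'m::ab_group_add set \<Rightarrow> ('a \<Rightarrow> 'm \<Rightarrow> 'm) \<Rightarrow> ('m \<Rightarrow> 'a \<Rightarrow> 'm) \<Rightarrow> bool" where
  "centrally_generated M l r \<longleftrightarrow>
     (\<forall>x\<in>M. \<exists>(k::nat) zs as. (\<forall>i<k. zs i \<in> central_elts M l r) \<and> x = (\<Sum>i<k. r (zs i) (as i)))"

lemma centrally_generatedI:
  fixes mult :: "'u::ab_group_add \<Rightarrow> 'm::ab_group_add" and l :: "'a::ring_1 \<Rightarrow> 'm \<Rightarrow> 'm"
  assumes tp: "tensor_product (central_elts M l r) UNIV R r (*) U tensZ"
    and mult: "additive_on U mult"
    and mult_tens: "\<And>z a. z \<in> central_elts M l r \<Longrightarrow> mult (tensZ z a) = r z a"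
    and "M \<subseteq> mult ` U"
  shows "centrally_generated M l r"
  unfolding centrally_generated_def
proof
  fix x assume "x \<in> M"
  then obtain u where "u \<in> U" "x = mult u" using \<open>M \<subseteq> mult ` U\<close> by blast
  then obtain k zs as where u: "u = (\<Sum>i<(k::nat). tensZ (zs i) (as i))"
    and zs: "\<forall>i<k. zs i \<in> central_elts M l r"
    using tp unfolding tensor_product_def by blast
  have "x = (\<Sum>i<k. r (zs i) (as i))"
    using tensor_product_additive_sum[OF tp mult, of k zs as] zs
    by (simp add: \<open>x = mult u\<close> u mult_tens)
  then show "\<exists>(k::nat) zs as. (\<forall>i<k. zs i \<in> central_elts M l r) \<and> x = (\<Sum>i<k. r (zs i) (as i))"
    using zs by blast
qed

locale tensor_square =
  fixes M :: "'m::ab_group_add set" and l :: "'a::ring_1 \<Rightarrow> 'm \<Rightarrow> 'm" and r :: "'m \<Rightarrow> 'a \<Rightarrow> 'm"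
    and T :: "'t::ab_group_add set" and tens :: "'m \<Rightarrow> 'm \<Rightarrow> 't"
    and lT :: "'a \<Rightarrow> 't \<Rightarrow> 't" and rT :: "'t \<Rightarrow> 'a \<Rightarrow> 't"
  assumes bimod: "bimod M l r"
    and tensor: "tensor_product M M UNIV r l T tens"
    and lT_additive: "additive_on T (lT a)"
    and rT_additive: "additive_on T (\<lambda>t. rT t a)"
    and lT_tens: "x \<in> M \<Longrightarrow> y \<in> M \<Longrightarrow> lT a (tens x y) = tens (l a x) y"
    and rT_tens: "x \<in> M \<Longrightarrow> y \<in> M \<Longrightarrow> rT (tens x y) a = tens x (r y a)"
begin

lemma M_subgrp: "subgrp M"
  and l_mem: "x \<in> M \<Longrightarrow> l a x \<in> M"
  and r_mem: "x \<in> M \<Longrightarrow> r x a \<in> M"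
  and l_add_scalar: "x \<in> M \<Longrightarrow> l (a + b) x = l a x + l b x"
  and l_one: "x \<in> M \<Longrightarrow> l 1 x = x"
  and r_mult: "x \<in> M \<Longrightarrow> r x (a * b) = r (r x a) b"
  and l_r_commute: "x \<in> M \<Longrightarrow> r (l a x) b = l a (r x b)"
  using bimod by (simp_all add: bimod_def left_mod_def right_mod_def)

lemma T_subgrp: "subgrp T"
  using tensor_product_subgrp[OF tensor M_subgrp] .

lemma tens_mem: "x \<in> M \<Longrightarrow> y \<in> M \<Longrightarrow> tens x y \<in> T"
  using tensor_product_tens_mem[OF tensor] .

lemma lT_mem: "t \<in> T \<Longrightarrow> lT a t \<in> T"
  using tensor_product_image_subset[OF tensor lT_additive T_subgrp]
  by (simp add: lT_tens l_mem tens_mem image_subset_iff)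

lemma rT_mem: "t \<in> T \<Longrightarrow> rT t a \<in> T"
  using tensor_product_image_subset[OF tensor rT_additive T_subgrp]
  by (simp add: rT_tens r_mem tens_mem image_subset_iff)

lemma lT_add_scalar: "t \<in> T \<Longrightarrow> lT (a + b) t = lT a t + lT b t"
proof (rule tensor_product_additive_eq[OF tensor lT_additive])
  show "additive_on T (\<lambda>t. lT a t + lT b t)"
    using lT_additive by (simp add: additive_on_def algebra_simps)
qed (simp_all add: lT_tens l_add_scalar l_mem tensor_product_add_left[OF tensor])

lemma lT_one: "t \<in> T \<Longrightarrow> lT 1 t = t"
  by (rule tensor_product_additive_eq[OF tensor lT_additive, of "\<lambda>t. t"])
     (simp_all add: additive_on_def lT_tens l_one)

lemma double_cancel:
  fixes h :: 'a
  assumes "h + h = 1" "x \<in> T" "y \<in> T" "x + x = y + y"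
  shows "x = y"
proof -
  have halve: "u = lT h (u + u)" if "u \<in> T" for u
  proof -
    have "u = lT (h + h) u" using that by (simp add: assms(1) lT_one)
    also have "\<dots> = lT h (u + u)"
      using that by (simp add: lT_add_scalar additive_onD[OF lT_additive])
    finally show ?thesis .
  qed
  show ?thesis using halve[OF \<open>x \<in> T\<close>] halve[OF \<open>y \<in> T\<close>] \<open>x + x = y + y\<close> by simp
qed

lemma tens_central_right_actions:
  assumes z: "z \<in> central_elts M l r" and z': "z' \<in> central_elts M l r"
  shows "tens (r z a) (r z' c) = rT (tens z z') (a * c)"
proof -
  have M: "z \<in> M" "z' \<in> M" using z z' by (simp_all add: central_elts_def)
  have "tens (r z a) (r z' c) = tens z (l a (r z' c))"
    using M by (simp add: tensor_product_balanced[OF tensor] r_mem)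
  also have "\<dots> = tens z (r (l a z') c)"
    using M by (simp add: l_r_commute)
  also have "\<dots> = tens z (r (r z' a) c)"
    using z' by (simp add: central_elts_def)
  also have "\<dots> = rT (tens z z') (a * c)"
    using M by (simp add: rT_tens r_mult)
  finally show ?thesis .
qed

lemma lT_rT_central:
  assumes z: "z \<in> central_elts M l r" and z': "z' \<in> central_elts M l r"
  shows "lT a (rT (tens z z') c) = rT (tens z z') (a * c)"
proof -
  have M: "z \<in> M" "z' \<in> M" using z z' by (simp_all add: central_elts_def)
  have "lT a (rT (tens z z') c) = tens (r z a) (r z' c)"
    using M z by (simp add: rT_tens lT_tens r_mem central_elts_def)
  then show ?thesis using tens_central_right_actions[OF z z'] by simp
qed

lemma tens_zero_left: "y \<in> M \<Longrightarrow> tens 0 y = 0"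
  and tens_zero_right: "x \<in> M \<Longrightarrow> tens x 0 = 0"
  using M_subgrp additive_on_zero[of M "\<lambda>x. tens x y"] additive_on_zero[of M "tens x"]
  by (simp_all add: additive_on_def subgrp_zero
      tensor_product_add_left[OF tensor] tensor_product_add_right[OF tensor])

lemma r_central_mem: "z \<in> central_elts M l r \<Longrightarrow> r z a \<in> M"
  by (simp add: central_elts_def r_mem)

lemma centrally_generated_left_induct:
  assumes cg: "centrally_generated M l r" and "x \<in> M" "y \<in> M"
    and zero: "Q 0"
    and add: "\<And>s t. s \<in> T \<Longrightarrow> t \<in> T \<Longrightarrow> Q s \<Longrightarrow> Q t \<Longrightarrow> Q (s + t)"
    and central: "\<And>z b. z \<in> central_elts M l r \<Longrightarrow> Q (tens (r z b) y)"
  shows "Q (tens x y)"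
proof -
  obtain k zs bs where zs: "\<forall>i<(k::nat). zs i \<in> central_elts M l r"
    and x: "x = (\<Sum>i<k. r (zs i) (bs i))"
    using cg \<open>x \<in> M\<close> unfolding centrally_generated_def by blast
  have "x \<in> M \<and> Q (tens x y)"
    unfolding x
  proof (rule sum_lessThan_closed)
    show "0 \<in> M \<and> Q (tens 0 y)"
      using \<open>y \<in> M\<close> M_subgrp by (simp add: tens_zero_left zero subgrp_zero)
    show "x \<in> M \<and> Q (tens x y) \<Longrightarrow> x' \<in> M \<and> Q (tens x' y) \<Longrightarrow>
        x + x' \<in> M \<and> Q (tens (x + x') y)" for x x'
      using \<open>y \<in> M\<close> M_subgrp by (simp add: subgrp_add tensor_product_add_left[OF tensor] add tens_mem)
    show "r (zs i) (bs i) \<in> M \<and> Q (tens (r (zs i) (bs i)) y)" if "i < k" for i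
      using zs that by (simp add: r_central_mem central)
  qed
  then show ?thesis by blast
qed

lemma centrally_generated_right_induct:
  assumes cg: "centrally_generated M l r" and "x \<in> M" "y \<in> M"
    and zero: "Q 0"
    and add: "\<And>s t. s \<in> T \<Longrightarrow> t \<in> T \<Longrightarrow> Q s \<Longrightarrow> Q t \<Longrightarrow> Q (s + t)"
    and central: "\<And>z b. z \<in> central_elts M l r \<Longrightarrow> Q (tens x (r z b))"
  shows "Q (tens x y)"
proof -
  obtain k zs bs where zs: "\<forall>i<(k::nat). zs i \<in> central_elts M l r"
    and y: "y = (\<Sum>i<k. r (zs i) (bs i))"
    using cg \<open>y \<in> M\<close> unfolding centrally_generated_def by blast
  have "y \<in> M \<and> Q (tens x y)"
    unfolding y
  proof (rule sum_lessThan_closed)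
    show "0 \<in> M \<and> Q (tens x 0)"
      using \<open>x \<in> M\<close> M_subgrp by (simp add: tens_zero_right zero subgrp_zero)
    show "y \<in> M \<and> Q (tens x y) \<Longrightarrow> y' \<in> M \<and> Q (tens x y') \<Longrightarrow>
        y + y' \<in> M \<and> Q (tens x (y + y'))" for y y'
      using \<open>x \<in> M\<close> M_subgrp by (simp add: subgrp_add tensor_product_add_right[OF tensor] add tens_mem)
    show "r (zs i) (bs i) \<in> M \<and> Q (tens x (r (zs i) (bs i)))" if "i < k" for i
      using zs that by (simp add: r_central_mem central)
  qed
  then show ?thesis by blast
qed

lemma centrally_generated_induct [consumes 2, case_names zero add central]:
  assumes cg: "centrally_generated M l r" and "t \<in> T"
    and zero: "Q 0"
    and add: "\<And>s t. s \<in> T \<Longrightarrow> t \<in> T \<Longrightarrow> Q s \<Longrightarrow> Q t \<Longrightarrow> Q (s + t)"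
    and central: "\<And>z z' c. z \<in> central_elts M l r \<Longrightarrow> z' \<in> central_elts M l r \<Longrightarrow> Q (rT (tens z z') c)"
  shows "Q t"
proof -
  have "Q (tens x y)" if "x \<in> M" "y \<in> M" for x y
  proof (rule centrally_generated_left_induct[OF cg that zero add])
    fix z a assume z: "z \<in> central_elts M l r"
    show "Q (tens (r z a) y)"
    proof (rule centrally_generated_right_induct[OF cg r_central_mem[OF z] \<open>y \<in> M\<close> zero add])
      show "Q (tens (r z a) (r z' c))" if "z' \<in> central_elts M l r" for z' c
        using central[OF z that] by (simp add: tens_central_right_actions[OF z that])
    qed
  qed
  with tensor \<open>t \<in> T\<close> show ?thesis
    by (induction rule: tensor_product_induct) (simp_all add: zero add)
qed

lemma flip_left_linear:
  assumes cg: "centrally_generated M l r"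
    and s: "additive_on T s" "s ` T \<subseteq> T"
    and s_right: "\<And>t c. t \<in> T \<Longrightarrow> s (rT t c) = rT (s t) c"
    and s_flip: "\<And>z z'. z \<in> central_elts M l r \<Longrightarrow> z' \<in> central_elts M l r \<Longrightarrow> s (tens z z') = tens z' z"
    and "t \<in> T"
  shows "s (lT a t) = lT a (s t)"
  using cg \<open>t \<in> T\<close>
proof (induction rule: centrally_generated_induct)
  case zero
  show ?case
    using additive_on_zero[OF s(1)] additive_on_zero[OF lT_additive] T_subgrp subgrp_zero by metis
next
  case (add t t')
  then show ?case
    using s by (simp add: lT_mem additive_onD[OF s(1)] additive_onD[OF lT_additive] image_subset_iff)
next
  case (central z z' c)
  have M: "z \<in> M" "z' \<in> M" using central by (simp_all add: central_elts_def)
  have "s (lT a (rT (tens z z') c)) = rT (tens z' z) (a * c)"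
    using central M by (simp add: lT_rT_central s_right s_flip tens_mem)
  also have "\<dots> = lT a (s (rT (tens z z') c))"
    using central M by (simp add: lT_rT_central s_right s_flip tens_mem)
  finally show ?case .
qed

lemma induced_left_linear:
  assumes W: "additive_on T W" and N: "left_mod N l"
    and W_tens: "\<And>x y. x \<in> M \<Longrightarrow> y \<in> M \<Longrightarrow> W (tens x y) \<in> N"
    and W_left: "\<And>x y. x \<in> M \<Longrightarrow> y \<in> M \<Longrightarrow> W (tens (l a x) y) = l a (W (tens x y))"
    and "t \<in> T"
  shows "W (lT a t) = l a (W t)"
proof (rule tensor_product_additive_eq[OF tensor _ _ _ \<open>t \<in> T\<close>])
  have "subgrp N" "additive_on N (l a)" using N by (simp_all add: left_mod_def additive_on_def)
  then have "W ` T \<subseteq> N" using tensor_product_image_subset[OF tensor W] W_tens by blast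
  then show "additive_on T (\<lambda>t. l a (W t))"
    using additive_on_comp[OF W] \<open>additive_on N (l a)\<close> by blast
  show "additive_on T (\<lambda>t. W (lT a t))"
    using additive_on_comp[OF lT_additive _ W] lT_mem by blast
qed (simp add: lT_tens W_left)

lemma induced_right_linear:
  assumes W: "additive_on T W" and N: "right_mod N r"
    and W_tens: "\<And>x y. x \<in> M \<Longrightarrow> y \<in> M \<Longrightarrow> W (tens x y) \<in> N"
    and W_right: "\<And>x y. x \<in> M \<Longrightarrow> y \<in> M \<Longrightarrow> W (tens x (r y a)) = r (W (tens x y)) a"
    and "t \<in> T"
  shows "W (rT t a) = r (W t) a"
proof (rule tensor_product_additive_eq[OF tensor _ _ _ \<open>t \<in> T\<close>])
  have "subgrp N" "additive_on N (\<lambda>x. r x a)" using N by (simp_all add: right_mod_def additive_on_def)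
  then have "W ` T \<subseteq> N" using tensor_product_image_subset[OF tensor W] W_tens by blast
  then show "additive_on T (\<lambda>t. r (W t) a)"
    using additive_on_comp[OF W] \<open>additive_on N (\<lambda>x. r x a)\<close> by blast
  show "additive_on T (\<lambda>t. W (rT t a))"
    using additive_on_comp[OF rT_additive _ W] rT_mem by blast
qed (simp add: rT_tens W_right)

lemma bilinear_of_flip_projection:
  fixes h :: 'a
  assumes cg: "centrally_generated M l r"
    and P: "additive_on T P"
    and decomp: "\<forall>t\<in>T. \<exists>k\<in>K. \<exists>f\<in>F. t = k + f" and "K \<subseteq> T" "F \<subseteq> T"
    and P_K: "\<forall>k\<in>K. P k = k" and P_F: "\<forall>f\<in>F. P f = 0"
    and K_right: "\<forall>k\<in>K. \<forall>c. rT k c \<in> K" and F_right: "\<forall>f\<in>F. \<forall>c. rT f c \<in> F"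
    and flip: "\<forall>z\<in>central_elts M l r. \<forall>z'\<in>central_elts M l r. sigma_of P (tens z z') = tens z' z"
    and half: "h + h = 1"
    and "t \<in> T"
  shows "sigma_of P (lT a t) = lT a (sigma_of P t)" and "sigma_of P (rT t a) = rT (sigma_of P t) a"
    and "P (lT a t) = lT a (P t)" and "P (rT t a) = rT (P t) a"
proof -
  have P_T: "P ` T \<subseteq> T"
  proof
    fix u assume "u \<in> P ` T"
    then obtain t where "t \<in> T" and u: "u = P t" by blast
    then obtain k f where kf: "k \<in> K" "f \<in> F" "t = k + f" using decomp by blast
    then have "k \<in> T" "f \<in> T" using \<open>K \<subseteq> T\<close> \<open>F \<subseteq> T\<close> by blast+
    then have "u = k" using u kf by (simp add: additive_onD[OF P] P_K P_F)
    then show "u \<in> T" using \<open>k \<in> T\<close> by simp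
  qed
  have P_right: "P (rT t c) = rT (P t) c" if "t \<in> T" for t c
    using projection_commute[OF P rT_additive decomp \<open>K \<subseteq> T\<close> \<open>F \<subseteq> T\<close> _ _ _ _ that]
      P_K P_F K_right F_right by blast
  have sigma_right: "sigma_of P (rT t c) = rT (sigma_of P t) c" if "t \<in> T" for t c
    using sigma_of_commute[OF T_subgrp rT_additive P_T that P_right[OF that]] .
  have sigma_left: "sigma_of P (lT a t) = lT a (sigma_of P t)" if "t \<in> T" for t
    using flip_left_linear[OF cg sigma_of_additive[OF P] sigma_of_image_subset[OF T_subgrp P_T]
        sigma_right _ that] flip by blast
  have "P (lT a t) = lT a (P t)"
  proof (rule commute_of_sigma_of_commute[OF T_subgrp lT_additive _ P_T \<open>t \<in> T\<close> _
        sigma_left[OF \<open>t \<in> T\<close>]])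
    show "lT a ` T \<subseteq> T" using lT_mem by blast
    show "x = y" if "x \<in> T" "y \<in> T" "x + x = y + y" for x y
      using double_cancel[OF half that] .
  qed
  then show "sigma_of P (lT a t) = lT a (sigma_of P t)" and "sigma_of P (rT t a) = rT (sigma_of P t) a"
    and "P (lT a t) = lT a (P t)" and "P (rT t a) = rT (P t) a"
    using sigma_left sigma_right P_right \<open>t \<in> T\<close> by simp_all
qed

end

lemma complex_alg_half:
  assumes "complex_alg \<kappa>"
  shows "\<kappa> (1/2) + \<kappa> (1/2) = 1"
proof -
  have one: "\<kappa> 1 = 1" and add: "\<And>x y. \<kappa> (x + y) = \<kappa> x + \<kappa> y"
    using assms unfolding complex_alg_def by simp_all
  show ?thesis using add[of "1/2" "1/2"] one by simp
qed

lemma diff_calculusD: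
  assumes "diff_calculus \<kappa> Om lm rm \<iota> w d"
  shows "complex_alg \<kappa>" and "bimod (Om j) lm rm"
    and "left_mod (Om j) lm" and "right_mod (Om j) rm"
    and "x \<in> Om j \<Longrightarrow> y \<in> Om k \<Longrightarrow> w x y \<in> Om (j + k)"
    and "x \<in> Om j \<Longrightarrow> y \<in> Om k \<Longrightarrow> w (lm a x) y = lm a (w x y)"
    and "x \<in> Om j \<Longrightarrow> y \<in> Om k \<Longrightarrow> w x (rm y a) = rm (w x y) a"
proof -
  have "complex_alg \<kappa>" "\<forall>j. bimod (Om j) lm rm"
    "\<forall>j k. \<forall>x\<in>Om j. \<forall>y\<in>Om k. w x y \<in> Om (j + k)"
    "\<forall>j k a. \<forall>x\<in>Om j. \<forall>y\<in>Om k.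
        w (lm a x) y = lm a (w x y) \<and> w (rm x a) y = w x (lm a y) \<and> w x (rm y a) = rm (w x y) a"
    by (insert assms[unfolded diff_calculus_def], (elim conjE, assumption)+)
  then show "complex_alg \<kappa>" "bimod (Om j) lm rm" "left_mod (Om j) lm" "right_mod (Om j) rm"
    and "x \<in> Om j \<Longrightarrow> y \<in> Om k \<Longrightarrow> w x y \<in> Om (j + k)"
    and "x \<in> Om j \<Longrightarrow> y \<in> Om k \<Longrightarrow> w (lm a x) y = lm a (w x y)"
    and "x \<in> Om j \<Longrightarrow> y \<in> Om k \<Longrightarrow> w x (rm y a) = rm (w x y) a"
    by (simp_all add: bimod_def)
qed

lemma diff_calculus_wedge_bilinear:
  assumes calc: "diff_calculus \<kappa> Om lm rm \<iota> w d"
    and "tensor_square (Om 1) lm rm T tens lT rT"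
    and wT: "additive_on T wT" and wT_tens: "\<forall>x\<in>Om 1. \<forall>y\<in>Om 1. wT (tens x y) = w x y"
    and t: "t \<in> T"
  shows "wT (lT a t) = lm a (wT t)" and "wT (rT t a) = rm (wT t) a"
proof -
  interpret tensor_square "Om 1" lm rm T tens lT rT by fact
  have w_mem: "\<And>x y. x \<in> Om 1 \<Longrightarrow> y \<in> Om 1 \<Longrightarrow> w x y \<in> Om 2"
    using diff_calculusD(5)[OF calc, where j = 1 and k = 1, unfolded one_add_one] .
  show "wT (lT a t) = lm a (wT t)"
    by (rule induced_left_linear[OF wT diff_calculusD(3)[OF calc, of 2] _ _ t])
       (simp_all add: wT_tens w_mem l_mem diff_calculusD(6)[OF calc] del: One_nat_def)
  show "wT (rT t a) = rm (wT t) a"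
    by (rule induced_right_linear[OF wT diff_calculusD(4)[OF calc, of 2] _ _ t])
       (simp_all add: wT_tens w_mem r_mem diff_calculusD(7)[OF calc] del: One_nat_def)
qed

theorem proposition6p3:
  fixes \<kappa> :: "complex \<Rightarrow> 'a::ring_1"
    and Om :: "nat \<Rightarrow> 'o::ab_group_add set"
    and lm :: "'a \<Rightarrow> 'o \<Rightarrow> 'o" and rm :: "'o \<Rightarrow> 'a \<Rightarrow> 'o"
    and \<iota> :: "'a \<Rightarrow> 'o" and w :: "'o \<Rightarrow> 'o \<Rightarrow> 'o" and d :: "'o \<Rightarrow> 'o"
    and T :: "'t::ab_group_add set" and tens :: "'o \<Rightarrow> 'o \<Rightarrow> 't"
    and lT :: "'a \<Rightarrow> 't \<Rightarrow> 't" and rT :: "'t \<Rightarrow> 'a \<Rightarrow> 't"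
    and wT :: "'t \<Rightarrow> 'o" and F :: "'t set" and P :: "'t \<Rightarrow> 't"
    and U :: "'u::ab_group_add set" and tensZ :: "'o \<Rightarrow> 'a \<Rightarrow> 'u" and mult :: "'u \<Rightarrow> 'o"
  assumes calc: "diff_calculus \<kappa> Om lm rm \<iota> w d"
    and fgp: "fg_projective_right (Om 1) rm"
    \<comment> \<open>T = E \<otimes>_A E with its A-bimodule structure\<close>
    and tensT: "tensor_product (Om 1) (Om 1) UNIV rm lm T tens"
    and lT_add: "\<forall>a. \<forall>s\<in>T. \<forall>t\<in>T. lT a (s + t) = lT a s + lT a t"
    and rT_add: "\<forall>a. \<forall>s\<in>T. \<forall>t\<in>T. rT (s + t) a = rT s a + rT t a"
    and lT_tens: "\<forall>a. \<forall>x\<in>Om 1. \<forall>y\<in>Om 1. lT a (tens x y) = tens (lm a x) y"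
    and rT_tens: "\<forall>a. \<forall>x\<in>Om 1. \<forall>y\<in>Om 1. rT (tens x y) a = tens x (rm y a)"
    \<comment> \<open>the induced map \<wedge> : E \<otimes>_A E \<rightarrow> \<Omega>^2\<close>
    and wT_add: "\<forall>s\<in>T. \<forall>t\<in>T. wT (s + t) = wT s + wT t"
    and wT_tens: "\<forall>x\<in>Om 1. \<forall>y\<in>Om 1. wT (tens x y) = w x y"
    \<comment> \<open>condition (1)\<close>
    and tensU: "tensor_product (central_elts (Om 1) lm rm) (UNIV :: 'a set) centre rm (*) U tensZ"
    and mult_add: "\<forall>s\<in>U. \<forall>t\<in>U. mult (s + t) = mult s + mult t"
    and mult_tens: "\<forall>x\<in>central_elts (Om 1) lm rm. \<forall>a. mult (tensZ x a) = rm x a"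
    and cond1: "bij_betw mult U (Om 1)"
    \<comment> \<open>condition (2)\<close>
    and F_sub: "F \<subseteq> T"
    and F_mod: "right_mod F rT"
    and decomp: "\<forall>t\<in>T. \<exists>k\<in>{s\<in>T. wT s = 0}. \<exists>f\<in>F. t = k + f"
    and inter: "{s\<in>T. wT s = 0} \<inter> F = {0}"
    and Q_lin: "\<forall>a. \<forall>t\<in>F. wT (rT t a) = rm (wT t) a"
    and Q_iso: "bij_betw wT F (Om 2)"
    \<comment> \<open>P_sym: the idempotent with image ker \<wedge> and kernel F\<close>
    and P_add: "\<forall>s\<in>T. \<forall>t\<in>T. P (s + t) = P s + P t"
    and P_idem: "\<forall>t\<in>T. P (P t) = P t"
    and P_img: "P ` T = {s\<in>T. wT s = 0}"
    and P_ker: "{t\<in>T. P t = 0} = F"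
    \<comment> \<open>condition (3)\<close>
    and cond3: "\<forall>\<omega>\<in>central_elts (Om 1) lm rm. \<forall>\<eta>\<in>central_elts (Om 1) lm rm.
                  sigma_of P (tens \<omega> \<eta>) = tens \<eta> \<omega>"
  shows "(\<forall>a. \<forall>t\<in>T. sigma_of P (lT a t) = lT a (sigma_of P t)
                     \<and> sigma_of P (rT t a) = rT (sigma_of P t) a
                     \<and> P (lT a t) = lT a (P t) \<and> P (rT t a) = rT (P t) a)
       \<and> ((\<forall>a. \<forall>t\<in>F. lT a t \<in> F \<and> rT t a \<in> F
                    \<and> wT (lT a t) = lm a (wT t) \<and> wT (rT t a) = rm (wT t) a)
          \<and> bij_betw wT F (Om 2))"
proof -
  interpret E: tensor_square "Om 1" lm rm T tens lT rT
    using diff_calculusD(2)[OF calc] tensT lT_add rT_add lT_tens rT_tens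
    by unfold_locales (simp_all add: additive_on_def)
  have cg: "centrally_generated (Om 1) lm rm"
    using centrally_generatedI[OF tensU] mult_add mult_tens cond1
    by (simp add: additive_on_def bij_betw_def)
  have wT: "additive_on T wT" using wT_add by (simp add: additive_on_def)
  note wedge = diff_calculus_wedge_bilinear[OF calc E.tensor_square_axioms wT wT_tens]
  have P: "additive_on T P" using P_add by (simp add: additive_on_def)
  have P_K: "\<forall>k\<in>{s\<in>T. wT s = 0}. P k = k"
    using P_idem P_img by (metis imageE)
  have P_F: "\<forall>f\<in>F. P f = 0"
    using P_ker by blast
  have K_right: "\<forall>k\<in>{s\<in>T. wT s = 0}. \<forall>a. rT k a \<in> {s\<in>T. wT s = 0}"
    by (simp add: E.rT_mem wedge right_mod_zero[OF diff_calculusD(4)[OF calc]])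
  have F_right: "\<forall>f\<in>F. \<forall>a. rT f a \<in> F"
    using F_mod unfolding right_mod_def by blast
  note bilinear =
    E.bilinear_of_flip_projection[OF cg P decomp Collect_subset F_sub P_K P_F K_right F_right cond3
      complex_alg_half[OF diff_calculusD(1)[OF calc]]]
  show ?thesis
  proof (intro conjI allI ballI)
    fix a t assume "t \<in> T"
    then show "sigma_of P (lT a t) = lT a (sigma_of P t)" "sigma_of P (rT t a) = rT (sigma_of P t) a"
        "P (lT a t) = lT a (P t)" "P (rT t a) = rT (P t) a"
      by (simp_all add: bilinear)
  next
    fix a t assume t: "t \<in> F"
    then have "t \<in> T" "P (lT a t) = 0"
      using F_sub additive_on_zero[OF E.lT_additive subgrp_zero[OF E.T_subgrp]]
      by (auto simp: bilinear P_F)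
    then show "lT a t \<in> F" using P_ker E.lT_mem by blast
    show "rT t a \<in> F" using t F_right by blast
    show "wT (lT a t) = lm a (wT t)" using \<open>t \<in> T\<close> by (simp add: wedge)
    show "wT (rT t a) = rm (wT t) a" using t Q_lin by blast
  qed (rule Q_iso)
qed

end
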